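(* The short exact sequence $1\to K\to G_2\xrightarrow{\phi}S_8\to1$ is split, i.e. there is a subgroup $H\subseteq G_2$ such that $\phi|_H:H\to S_8$ is an isomorphism.
   Context: The $2\times2\times2$ Rubik's cube consists of 8 corner cubelets, each carrying 3 colored stickers. Corner positions are numbered 1 = top-front-left, 2 = top-front-right, 3 = top-back-left, 4 = top-back-right, 5 = bottom-front-left, 6 = bottom-front-right, 7 = bottom-back-left, 8 = bottom-back-right. $G_2$ is the subgroup of the symmetric group on the 24 stickers generated by the six moves $u,d,f,b,l,r$ rotating respectively the top, bottom, front, back, left, right layer of four cubelets by $90^\circ$ clockwise as seen from outside facing that face. $\phi:G_2\to S_8$ is the (surjective) homomorphism recording the permutation of corner positions, and $K=\ker\phi$. *)

theory Defs
  imports "HOL-Algebra.Algebra"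
begin

datatype face = Up | Down | Front | Back | Left | Right

fun corner_faces :: "nat \<Rightarrow> face set" where
  "corner_faces c =
    (if c = 1 then {Up, Front, Left} else
     if c = 2 then {Up, Front, Right} else
     if c = 3 then {Up, Back, Left} else
     if c = 4 then {Up, Back, Right} else
     if c = 5 then {Down, Front, Left} else
     if c = 6 then {Down, Front, Right} else
     if c = 7 then {Down, Back, Left} else
     if c = 8 then {Down, Back, Right} else {})"

definition corner_of :: "face set \<Rightarrow> nat" where
  "corner_of S =
    (if S = {Up, Front, Left} then 1 else
     if S = {Up, Front, Right} then 2 else
     if S = {Up, Back, Left} then 3 else
     if S = {Up, Back, Right} then 4 else
     if S = {Down, Front, Left} then 5 else
     if S = {Down, Front, Right} then 6 else
     if S = {Down, Back, Left} then 7 else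
     if S = {Down, Back, Right} then 8 else 0)"

text \<open>The 24 stickers: a sticker is a pair (corner position, face it lies on).\<close>
definition Stickers :: "(nat \<times> face) set" where
  "Stickers = {(c, Y). c \<in> {1..8} \<and> Y \<in> corner_faces c}"

text \<open>Quarter turn of the whole space by 90 degrees clockwise as seen from
  outside facing face X, acting on face directions
  (coordinates: x = Right, y = Up, z = Front).\<close>
fun rotf :: "face \<Rightarrow> face \<Rightarrow> face" where
  "rotf Up Y = (case Y of Front \<Rightarrow> Left | Left \<Rightarrow> Back | Back \<Rightarrow> Right | Right \<Rightarrow> Front | _ \<Rightarrow> Y)"
| "rotf Down Y = (case Y of Front \<Rightarrow> Right | Right \<Rightarrow> Back | Back \<Rightarrow> Left | Left \<Rightarrow> Front | _ \<Rightarrow> Y)"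
| "rotf Front Y = (case Y of Up \<Rightarrow> Right | Right \<Rightarrow> Down | Down \<Rightarrow> Left | Left \<Rightarrow> Up | _ \<Rightarrow> Y)"
| "rotf Back Y = (case Y of Right \<Rightarrow> Up | Up \<Rightarrow> Left | Left \<Rightarrow> Down | Down \<Rightarrow> Right | _ \<Rightarrow> Y)"
| "rotf Right Y = (case Y of Up \<Rightarrow> Back | Back \<Rightarrow> Down | Down \<Rightarrow> Front | Front \<Rightarrow> Up | _ \<Rightarrow> Y)"
| "rotf Left Y = (case Y of Up \<Rightarrow> Front | Front \<Rightarrow> Down | Down \<Rightarrow> Back | Back \<Rightarrow> Up | _ \<Rightarrow> Y)"

definition move :: "face \<Rightarrow> (nat \<times> face) \<Rightarrow> (nat \<times> face)" where
  "move A = restrict (\<lambda>(c, Y).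
      if A \<in> corner_faces c then (corner_of (rotf A ` corner_faces c), rotf A Y) else (c, Y)) Stickers"

definition Sym24 :: "((nat \<times> face) \<Rightarrow> (nat \<times> face)) monoid" where
  "Sym24 = BijGroup Stickers"

definition G2 :: "((nat \<times> face) \<Rightarrow> (nat \<times> face)) monoid" where
  "G2 = Sym24\<lparr>carrier := generate Sym24 {move Up, move Down, move Front, move Back, move Left, move Right}\<rparr>"

definition phi :: "((nat \<times> face) \<Rightarrow> (nat \<times> face)) \<Rightarrow> (nat \<Rightarrow> nat)" where
  "phi g = (\<lambda>c. if c \<in> {1..8} then fst (g (c, SOME Y. Y \<in> corner_faces c)) else c)"

end

theory Submission
  imports Defs
begin

(* Number the three faces of each corner position starting from its U or D face and running
   around the corner in the same rotational sense at every corner. Moving the cubelets by a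
   permutation s of the positions, face number k going to face number k, defines a
   homomorphism corner_lift from S_8 to the sticker permutations, and phi undoes it. Its
   image lies in G_2 because S_8 is generated by the transpositions (1 k) and the lift of
   each of them is an explicit word in the six moves. So the image is a subgroup H of G_2
   on which phi is inverse to corner_lift. *)

lemma generate_sym_group_transpositions:
  assumes a: "a \<in> {1..n}"
  shows "generate (sym_group n) (Transposition.transpose a ` {1..n}) = carrier (sym_group n)"
    (is "generate _ ?T = _")
proof
  have "?T \<subseteq> carrier (sym_group n)"
    using a by (auto simp: sym_group_carrier permutes_swap_id)
  then show "generate (sym_group n) ?T \<subseteq> carrier (sym_group n)"
    using group.generate_in_carrier[OF sym_group_is_group] by blast
next
  have star: "Transposition.transpose a k \<in> generate (sym_group n) ?T" if "k \<in> {1..n}" for k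
    using that by (intro generate.incl) simp
  have transposition: "Transposition.transpose b c \<in> generate (sym_group n) ?T"
    if "b \<in> {1..n}" "c \<in> {1..n}" "b \<noteq> c" for b c
  proof -
    consider "b = a" | "c = a" | "a \<noteq> b" "a \<noteq> c"
      by blast
    then show ?thesis
    proof cases
      case 1
      then show ?thesis
        using star that by simp
    next
      case 2
      then show ?thesis
        using star[of b] that by (simp add: transpose_commute)
    next
      case 3
      then have "Transposition.transpose b c =
          Transposition.transpose a b \<circ> Transposition.transpose a c \<circ> Transposition.transpose a b"
        using transpose_comp_triple[of b c a] \<open>b \<noteq> c\<close> by (simp add: transpose_commute)
      then show ?thesis
        using generate.eng[OF generate.eng[OF star star] star] that by (simp add: sym_group_mult)
    qed
  qed
  show "carrier (sym_group n) \<subseteq> generate (sym_group n) ?T"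
  proof
    fix p
    assume "p \<in> carrier (sym_group n)"
    then have "p permutes {1..n}"
      by (simp add: sym_group_carrier)
    from this finite_atLeastAtMost show "p \<in> generate (sym_group n) ?T"
    proof (induction rule: permutes_induct)
      case id
      show ?case
        using generate.one[of "sym_group n"] by (simp add: sym_group_one id_def)
    next
      case (swap b c p)
      show ?case
        using generate.eng[OF transposition[OF swap.hyps(1-3)] swap.IH] by (simp add: sym_group_mult comp_def)
    qed
  qed
qed

lemma (in group_hom) iso_image_of_left_inverse:
  assumes inverse: "\<And>x. x \<in> carrier G \<Longrightarrow> g (h x) = x"
  shows "g \<in> iso (H\<lparr>carrier := h ` carrier G\<rparr>) G"
proof -
  let ?K = "H\<lparr>carrier := h ` carrier G\<rparr>"
  have "g \<in> hom ?K G"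
  proof (rule homI)
    fix y y'
    assume "y \<in> carrier ?K" "y' \<in> carrier ?K"
    then obtain x x' where "x \<in> carrier G" "x' \<in> carrier G" "y = h x" "y' = h x'"
      by auto
    then show "g (y \<otimes>\<^bsub>?K\<^esub> y') = g y \<otimes> g y'"
      by (simp add: inverse flip: hom_mult)
  qed (auto simp: inverse)
  moreover have "bij_betw g (h ` carrier G) (carrier G)"
    by (intro bij_betw_byWitness[where f' = h]) (auto simp: inverse)
  ultimately show ?thesis
    by (simp add: iso_def)
qed

lemma face_UNIV: "(UNIV :: face set) = {Up, Down, Front, Back, Left, Right}"
  by (auto intro: face.exhaust)

lemma face_set_eq_iff:
  "(S :: face set) = T \<longleftrightarrow> (\<forall>Y\<in>{Up, Down, Front, Back, Left, Right}. Y \<in> S \<longleftrightarrow> Y \<in> T)"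
  by (auto simp: face_UNIV[symmetric])

declare corner_faces.simps [simp del]

lemma Stickers_eq: "Stickers =
   {(1, Up), (1, Left), (1, Front), (2, Up), (2, Front), (2, Right),
    (3, Up), (3, Back), (3, Left), (4, Up), (4, Right), (4, Back),
    (5, Down), (5, Front), (5, Left), (6, Down), (6, Right), (6, Front),
    (7, Down), (7, Left), (7, Back), (8, Down), (8, Back), (8, Right)}"
proof -
  have "Stickers = (\<Union>c\<in>{1..8}. Pair c ` corner_faces c)"
    by (auto simp: Stickers_def)
  also have "{1..8::nat} = {1, 2, 3, 4, 5, 6, 7, 8}"
    by auto
  finally show ?thesis
    by (simp add: corner_faces.simps insert_commute)
qed

lemma move_outside_layer: "(c, Y) \<in> Stickers \<Longrightarrow> A \<notin> corner_faces c \<Longrightarrow> move A (c, Y) = (c, Y)"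
  by (simp add: move_def)

lemma move_layer:
  "move Up (1, Up) = (3, Up)" "move Up (1, Left) = (3, Back)" "move Up (1, Front) = (3, Left)"
  "move Up (2, Up) = (1, Up)" "move Up (2, Front) = (1, Left)" "move Up (2, Right) = (1, Front)"
  "move Up (3, Up) = (4, Up)" "move Up (3, Back) = (4, Right)" "move Up (3, Left) = (4, Back)"
  "move Up (4, Up) = (2, Up)" "move Up (4, Right) = (2, Front)" "move Up (4, Back) = (2, Right)"
  "move Down (5, Down) = (6, Down)" "move Down (5, Front) = (6, Right)" "move Down (5, Left) = (6, Front)"
  "move Down (6, Down) = (8, Down)" "move Down (6, Right) = (8, Back)" "move Down (6, Front) = (8, Right)"
  "move Down (7, Down) = (5, Down)" "move Down (7, Left) = (5, Front)" "move Down (7, Back) = (5, Left)"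
  "move Down (8, Down) = (7, Down)" "move Down (8, Back) = (7, Left)" "move Down (8, Right) = (7, Back)"
  "move Front (1, Up) = (2, Right)" "move Front (1, Left) = (2, Up)" "move Front (1, Front) = (2, Front)"
  "move Front (2, Up) = (6, Right)" "move Front (2, Front) = (6, Front)" "move Front (2, Right) = (6, Down)"
  "move Front (5, Down) = (1, Left)" "move Front (5, Front) = (1, Front)" "move Front (5, Left) = (1, Up)"
  "move Front (6, Down) = (5, Left)" "move Front (6, Right) = (5, Down)" "move Front (6, Front) = (5, Front)"
  "move Back (3, Up) = (7, Left)" "move Back (3, Back) = (7, Back)" "move Back (3, Left) = (7, Down)"
  "move Back (4, Up) = (3, Left)" "move Back (4, Right) = (3, Up)" "move Back (4, Back) = (3, Back)"
  "move Back (7, Down) = (8, Right)" "move Back (7, Left) = (8, Down)" "move Back (7, Back) = (8, Back)"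
  "move Back (8, Down) = (4, Right)" "move Back (8, Back) = (4, Back)" "move Back (8, Right) = (4, Up)"
  "move Left (1, Up) = (5, Front)" "move Left (1, Left) = (5, Left)" "move Left (1, Front) = (5, Down)"
  "move Left (3, Up) = (1, Front)" "move Left (3, Back) = (1, Up)" "move Left (3, Left) = (1, Left)"
  "move Left (5, Down) = (7, Back)" "move Left (5, Front) = (7, Down)" "move Left (5, Left) = (7, Left)"
  "move Left (7, Down) = (3, Back)" "move Left (7, Left) = (3, Left)" "move Left (7, Back) = (3, Up)"
  "move Right (2, Up) = (4, Back)" "move Right (2, Front) = (4, Up)" "move Right (2, Right) = (4, Right)"
  "move Right (4, Up) = (8, Back)" "move Right (4, Right) = (8, Right)" "move Right (4, Back) = (8, Down)"
  "move Right (6, Down) = (2, Front)" "move Right (6, Right) = (2, Right)" "move Right (6, Front) = (2, Up)"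
  "move Right (8, Down) = (6, Front)" "move Right (8, Back) = (6, Down)" "move Right (8, Right) = (6, Right)"
  by (simp_all add: move_def Stickers_eq corner_faces.simps corner_of_def face_set_eq_iff)

lemma move_Bij: "move A \<in> Bij Stickers"
proof -
  have "\<forall>x\<in>Stickers. move A x \<in> Stickers \<and> move A (move A (move A (move A x))) = x"
    \<comment> \<open>\<open>move_layer\<close> is stated with the numeral \<open>1\<close>, which \<open>One_nat_def\<close> would turn into \<open>Suc 0\<close>\<close>
    by (cases A)
      (simp_all del: One_nat_def add: Stickers_eq move_layer move_outside_layer corner_faces.simps)
  then have "bij_betw (move A) Stickers Stickers"
    by (intro bij_betw_byWitness[where f' = "\<lambda>x. move A (move A (move A x))"]) auto
  moreover have "move A \<in> extensional Stickers"
    by (simp add: move_def)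
  ultimately show ?thesis
    by (simp add: Bij_def)
qed

lemma group_Sym24: "group Sym24"
  by (simp add: Sym24_def group_BijGroup)

lemma carrier_Sym24: "carrier Sym24 = Bij Stickers"
  by (simp add: Sym24_def BijGroup_def)

lemma one_Sym24: "\<one>\<^bsub>Sym24\<^esub> = (\<lambda>x\<in>Stickers. x)"
  by (simp add: Sym24_def BijGroup_def)

lemma mult_Sym24: "f \<in> Bij Stickers \<Longrightarrow> g \<in> Bij Stickers \<Longrightarrow> f \<otimes>\<^bsub>Sym24\<^esub> g = compose Stickers f g"
  by (simp add: Sym24_def BijGroup_def)

lemma carrier_G2: "carrier G2 = generate Sym24 (range move)"
proof -
  have "{move Up, move Down, move Front, move Back, move Left, move Right} = range move"
    by (simp add: face_UNIV)
  then show ?thesis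
    by (simp add: G2_def)
qed

lemma subgroup_G2: "subgroup (carrier G2) Sym24"
  unfolding carrier_G2
  by (rule group.generate_is_subgroup[OF group_Sym24]) (auto simp: carrier_Sym24 move_Bij)

lemma group_G2: "group G2"
  using subgroup.subgroup_is_group[OF subgroup_G2 group_Sym24] by (simp add: G2_def)

lemma carrier_G2_subset_Bij: "carrier G2 \<subseteq> Bij Stickers"
  using subgroup.subset[OF subgroup_G2] by (simp add: carrier_Sym24)

definition move_word :: "face list \<Rightarrow> nat \<times> face \<Rightarrow> nat \<times> face" where
  "move_word ws = foldr (\<lambda>A g. move A \<otimes>\<^bsub>Sym24\<^esub> g) ws \<one>\<^bsub>Sym24\<^esub>"

lemma move_word_in_G2: "move_word ws \<in> carrier G2"
  by (induction ws) (auto simp: move_word_def carrier_G2 intro: generate.intros)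

lemma move_word_apply: "x \<in> Stickers \<Longrightarrow> move_word ws x = foldr move ws x"
proof (induction ws)
  case Nil
  then show ?case
    by (simp add: move_word_def one_Sym24)
next
  case (Cons A ws)
  have "move_word ws \<in> Bij Stickers"
    using move_word_in_G2 carrier_G2_subset_Bij by blast
  with Cons show ?case
    by (simp add: move_word_def mult_Sym24 move_Bij compose_eq)
qed

definition corner_frame :: "nat \<Rightarrow> face list" where
  "corner_frame c =
    (if c = 1 then [Up, Left, Front] else if c = 2 then [Up, Front, Right] else
     if c = 3 then [Up, Back, Left] else if c = 4 then [Up, Right, Back] else
     if c = 5 then [Down, Front, Left] else if c = 6 then [Down, Right, Front] else
     if c = 7 then [Down, Left, Back] else if c = 8 then [Down, Back, Right] else [])"

definition frame_index :: "nat \<Rightarrow> face \<Rightarrow> nat" where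
  "frame_index c Y = (if Y = corner_frame c ! 0 then 0 else if Y = corner_frame c ! 1 then 1 else 2)"

definition corner_lift :: "(nat \<Rightarrow> nat) \<Rightarrow> nat \<times> face \<Rightarrow> nat \<times> face" where
  "corner_lift s = (\<lambda>(c, Y) \<in> Stickers. (s c, corner_frame (s c) ! frame_index c Y))"

lemma corner_cases:
  assumes "(c :: nat) \<in> {1..8}"
  obtains "c = 1" | "c = 2" | "c = 3" | "c = 4" | "c = 5" | "c = 6" | "c = 7" | "c = 8"
  using assms by force

lemma frame_index_less: "frame_index c Y < 3"
  by (simp add: frame_index_def)

lemma corner_frame_nth_in_Stickers: "c \<in> {1..8} \<Longrightarrow> k < 3 \<Longrightarrow> (c, corner_frame c ! k) \<in> Stickers"
  by (elim corner_cases; auto simp: Stickers_eq corner_frame_def less_Suc_eq numeral_eq_Suc)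

lemma frame_index_nth: "c \<in> {1..8} \<Longrightarrow> k < 3 \<Longrightarrow> frame_index c (corner_frame c ! k) = k"
  by (elim corner_cases; auto simp: frame_index_def corner_frame_def less_Suc_eq numeral_eq_Suc)

lemma nth_frame_index: "(c, Y) \<in> Stickers \<Longrightarrow> corner_frame c ! frame_index c Y = Y"
  by (auto simp: Stickers_eq frame_index_def corner_frame_def)

lemma corner_lift_apply:
  "(c, Y) \<in> Stickers \<Longrightarrow> corner_lift s (c, Y) = (s c, corner_frame (s c) ! frame_index c Y)"
  by (simp add: corner_lift_def)

lemma corner_lift_in_Stickers:
  assumes "s permutes {1..8}" and "x \<in> Stickers"
  shows "corner_lift s x \<in> Stickers"
proof -
  obtain c Y where x: "x = (c, Y)" and c: "c \<in> {1..8}"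
    using assms(2) by (cases x) (auto simp: Stickers_def)
  then show ?thesis
    using assms permutes_in_image[OF assms(1)]
    by (simp add: corner_lift_apply corner_frame_nth_in_Stickers frame_index_less)
qed

lemma corner_lift_compose:
  assumes "r permutes {1..8}"
  shows "corner_lift (s \<circ> r) = compose Stickers (corner_lift s) (corner_lift r)"
proof
  fix x
  show "corner_lift (s \<circ> r) x = compose Stickers (corner_lift s) (corner_lift r) x"
  proof (cases "x \<in> Stickers")
    case True
    then obtain c Y where x: "x = (c, Y)" and c: "c \<in> {1..8}"
      by (cases x) (auto simp: Stickers_def)
    have "r c \<in> {1..8}"
      using c permutes_in_image[OF assms] by simp
    then show ?thesis
      using True
      by (simp add: x compose_def corner_lift_apply corner_frame_nth_in_Stickers frame_index_nth frame_index_less)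
  qed (simp add: corner_lift_def compose_def)
qed

lemma corner_lift_id: "corner_lift id = (\<lambda>x\<in>Stickers. x)"
  by (auto simp: corner_lift_def nth_frame_index)

lemma corner_lift_Bij:
  assumes "s permutes {1..8}"
  shows "corner_lift s \<in> Bij Stickers"
proof -
  let ?s' = "inv_into UNIV s"
  have s': "?s' permutes {1..8}"
    using assms by (rule permutes_inv)
  have "x \<in> Stickers \<Longrightarrow> corner_lift ?s' (corner_lift s x) = x" for x
    using fun_cong[OF corner_lift_compose[OF assms, of ?s'], of x]
    by (simp add: permutes_inv_o(2)[OF assms] corner_lift_id compose_def)
  moreover have "x \<in> Stickers \<Longrightarrow> corner_lift s (corner_lift ?s' x) = x" for x
    using fun_cong[OF corner_lift_compose[OF s', of s], of x]
    by (simp add: permutes_inv_o(1)[OF assms] corner_lift_id compose_def)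
  ultimately have "bij_betw (corner_lift s) Stickers Stickers"
    using corner_lift_in_Stickers[OF assms] corner_lift_in_Stickers[OF s']
    by (intro bij_betw_byWitness[where f' = "corner_lift ?s'"]) blast+
  then show ?thesis
    by (simp add: Bij_def corner_lift_def)
qed

lemma group_hom_corner_lift: "group_hom (sym_group 8) Sym24 corner_lift"
proof -
  have "corner_lift \<in> hom (sym_group 8) Sym24"
    by (rule homI)
      (simp_all add: sym_group_carrier carrier_Sym24 corner_lift_Bij sym_group_mult
        mult_Sym24 corner_lift_compose)
  then show ?thesis
    by (simp add: group_hom_def group_hom_axioms_def sym_group_is_group group_Sym24)
qed

lemma phi_corner_lift:
  assumes "s permutes {1..8}"
  shows "phi (corner_lift s) = s"
proof
  fix c
  show "phi (corner_lift s) c = s c"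
  proof (cases "c \<in> {1..8}")
    case True
    then have "(c, corner_frame c ! 0) \<in> Stickers"
      by (simp add: corner_frame_nth_in_Stickers)
    then have "(SOME Y. Y \<in> corner_faces c) \<in> corner_faces c"
      by (auto simp: Stickers_def intro: someI)
    with True show ?thesis
      by (simp add: phi_def corner_lift_apply Stickers_def)
  qed (auto simp: phi_def permutes_not_in[OF assms])
qed

lemma corner_lift_eq_move_word:
  assumes "\<forall>(c, Y) \<in> Stickers. corner_lift s (c, Y) = foldr move ws (c, Y)"
  shows "corner_lift s = move_word ws"
proof (rule extensionalityI[where A = Stickers])
  show "corner_lift s \<in> extensional Stickers"
    by (simp add: corner_lift_def)
  show "move_word ws \<in> extensional Stickers"
    using move_word_in_G2 carrier_G2_subset_Bij by (auto simp: Bij_def)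
  show "corner_lift s x = move_word ws x" if "x \<in> Stickers" for x
    using assms that by (auto simp: move_word_apply)
qed

lemma corner_lift_transpositions:
  "corner_lift (Transposition.transpose 1 2) =
    move_word [Front, Right, Up, Front, Front, Front, Right, Front, Up, Up, Front, Up, Right, Right, Up, Up, Up]"
  "corner_lift (Transposition.transpose 1 3) =
    move_word [Right, Right, Up, Right, Front, Front, Right, Up, Right, Right, Right, Front, Right, Front, Up, Up, Up]"
  "corner_lift (Transposition.transpose 1 4) =
    move_word [Front, Front, Up, Right, Right, Right, Up, Right, Front, Front, Right, Up, Up, Front, Front, Right, Up, Front, Up]"
  "corner_lift (Transposition.transpose 1 5) =
    move_word [Front, Up, Front, Right, Right, Front, Right, Up, Up, Right, Up, Front, Right, Right, Right]"
  "corner_lift (Transposition.transpose 1 6) =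
    move_word [Up, Front, Up, Right, Right, Up, Right, Front, Front, Right, Up, Front, Up, Up, Up, Right, Up, Up, Up]"
  "corner_lift (Transposition.transpose 1 7) =
    move_word [Down, Down, Down, Back, Left, Down, Down, Left, Back, Down, Down, Back, Left, Back, Down, Down, Down, Left, Down]"
  "corner_lift (Transposition.transpose 1 8) =
    move_word [Front, Up, Right, Right, Right, Front, Front, Right, Front, Front, Front, Right, Up, Front, Front, Right, Right]"
  by (rule corner_lift_eq_move_word,
      simp del: One_nat_def add: Stickers_eq corner_lift_def Transposition.transpose_def
        corner_frame_def frame_index_def move_layer move_outside_layer corner_faces.simps)+

lemma corner_lift_transpose_in_G2:
  assumes "k \<in> {1..8}"
  shows "corner_lift (Transposition.transpose 1 k) \<in> carrier G2"
  using assms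
proof (cases rule: corner_cases)
  case 1
  then show ?thesis
    using generate.one[of Sym24] by (simp add: carrier_G2 corner_lift_id one_Sym24)
qed (simp_all only: corner_lift_transpositions move_word_in_G2)

lemma corner_lift_in_G2:
  assumes "s \<in> carrier (sym_group 8)"
  shows "corner_lift s \<in> carrier G2"
proof -
  let ?T = "Transposition.transpose 1 ` {1..8}"
  have "?T \<subseteq> carrier (sym_group 8)"
    by (auto simp: sym_group_carrier permutes_swap_id)
  then have "corner_lift ` carrier (sym_group 8) = generate Sym24 (corner_lift ` ?T)"
    using group_hom.generate_img[OF group_hom_corner_lift] generate_sym_group_transpositions[of 1 8]
    by simp
  also have "\<dots> \<subseteq> carrier G2"
    using corner_lift_transpose_in_G2
    by (intro group.generate_subgroup_incl[OF group_Sym24 _ subgroup_G2]) auto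
  finally show ?thesis
    using assms by blast
qed

theorem proposition2p6:
  shows "\<exists>H. subgroup H G2 \<and> phi \<in> iso (G2\<lparr>carrier := H\<rparr>) (sym_group 8)"
proof -
  have "corner_lift \<in> hom (sym_group 8) G2"
  proof (rule homI)
    show "corner_lift (s \<otimes>\<^bsub>sym_group 8\<^esub> r) = corner_lift s \<otimes>\<^bsub>G2\<^esub> corner_lift r"
      if "s \<in> carrier (sym_group 8)" "r \<in> carrier (sym_group 8)" for s r
      using group_hom.hom_mult[OF group_hom_corner_lift that] by (simp add: G2_def)
  qed (rule corner_lift_in_G2)
  then interpret group_hom "sym_group 8" G2 corner_lift
    by (simp add: group_hom_def group_hom_axioms_def sym_group_is_group group_G2)
  let ?H = "corner_lift ` carrier (sym_group 8)"
  have "subgroup ?H G2"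
    by (rule img_is_subgroup)
  moreover have "phi \<in> iso (G2\<lparr>carrier := ?H\<rparr>) (sym_group 8)"
    by (rule iso_image_of_left_inverse) (simp add: sym_group_carrier phi_corner_lift)
  ultimately show ?thesis
    by blast
qed

end
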